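(* Assume the standing setup below. Let $s$ be a real number such that for some index $i$ with $1\le i\le k$ we have $s_i\le s$ and $s+r<s_{i+1}$. Then: (1) the simplicial complex $V_s(X)(y)$ is connected (and nonempty); (2) the function $\pi_0V_s(X)\to\pi_0V_s(Y)$, $[x]_{s,X}\mapsto[x]_{s,Y}$, induced by the inclusion $V_s(X)\subseteq V_s(Y)$, is a bijection.
   Context: For a finite set $Z\subset\mathbb{R}^n$ and a real number $s\ge 0$, the Vietoris–Rips complex $V_s(Z)$ is the simplicial complex with vertex set $Z$ whose simplices are the nonempty subsets $\sigma\subseteq Z$ with $d(z,z')\le s$ for all $z,z'\in\sigma$ ($d$ the Euclidean distance). For $z\in Z$, $[z]_{s,Z}\subseteq Z$ denotes the set of vertices of the path component of $V_s(Z)$ containing $z$. Standing setup: $X\subset\mathbb{R}^n$ is a finite set with at least two points, $y\in\mathbb{R}^n\setminus X$, $Y=X\sqcup\{y\}$. The phase change numbers of $X$ are the distinct values $0=s_0<s_1<\dots<s_k$ of $d(x,x')$ for $x,x'\in X$; set $s_{k+1}=+\infty$. There are $x_0\in X$ and a real $r>0$ with $d(y,x_0)<r$ and $r<s_{i+1}-s_i$ for all $0\le i<k$. For $s\ge0$, $V_s(X)(y)$ denotes the full subcomplex of $V_s(X)$ on the set of vertices $x\in X$ with $[x]_{s,Y}=[y]_{s,Y}$ (a full subcomplex on a vertex set $W$ consists of all simplices whose vertices all lie in $W$). *)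

theory Defs
  imports "HOL-Analysis.Analysis"
begin

definition rips :: "real \<Rightarrow> 'a::euclidean_space set \<Rightarrow> 'a set set" where
  "rips s Z = {\<sigma>. \<sigma> \<noteq> {} \<and> \<sigma> \<subseteq> Z \<and> (\<forall>z\<in>\<sigma>. \<forall>z'\<in>\<sigma>. dist z z' \<le> s)}"

definition sc_vertices :: "'a set set \<Rightarrow> 'a set" where
  "sc_vertices K = \<Union>K"

definition sc_edges :: "'a set set \<Rightarrow> ('a \<times> 'a) set" where
  "sc_edges K = {(a, b). {a, b} \<in> K}"

text \<open>A simplicial complex is connected iff it is nonempty and any two vertices are joined
  by an edge path (equivalently, its geometric realization is path connected).\<close>
definition sc_connected :: "'a set set \<Rightarrow> bool" where
  "sc_connected K \<longleftrightarrow> sc_vertices K \<noteq> {} \<and>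
     (\<forall>a\<in>sc_vertices K. \<forall>b\<in>sc_vertices K. (a, b) \<in> (sc_edges K)\<^sup>*)"

definition sc_component :: "'a set set \<Rightarrow> 'a \<Rightarrow> 'a set" where
  "sc_component K z = {w \<in> sc_vertices K. (z, w) \<in> (sc_edges K)\<^sup>*}"

definition rcls :: "real \<Rightarrow> 'a::euclidean_space set \<Rightarrow> 'a \<Rightarrow> 'a set" where
  "rcls s Z z = sc_component (rips s Z) z"

definition pi0 :: "real \<Rightarrow> 'a::euclidean_space set \<Rightarrow> 'a set set" where
  "pi0 s Z = rcls s Z ` Z"

definition full_subcomplex :: "'a set set \<Rightarrow> 'a set \<Rightarrow> 'a set set" where
  "full_subcomplex K W = {\<sigma> \<in> K. \<sigma> \<subseteq> W}"

text \<open>V_s(X)(y) for Y = insert y X.\<close>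
definition Vy :: "real \<Rightarrow> 'a::euclidean_space set \<Rightarrow> 'a \<Rightarrow> 'a set set" where
  "Vy s X y = full_subcomplex (rips s X)
      {x \<in> X. rcls s (insert y X) x = rcls s (insert y X) y}"

text \<open>Phase change numbers s_0 < s_1 < ... < s_k, as the sorted list of distinct distances.\<close>
definition phase :: "'a::euclidean_space set \<Rightarrow> real list" where
  "phase X = sorted_list_of_set {dist x x' | x x'. x \<in> X \<and> x' \<in> X}"

end

theory Submission
  imports Defs
begin

text \<open>Collapse the new point y onto x0. An edge y--b of V_s(Y) has length at most s, so
  x0--b has length less than s + r; as X has no distances in (s, s + r), x0--b is an edge of
  V_s(X). Hence every path in V_s(Y) collapses to a path in V_s(X): adding y merges no two
  components of V_s(X), and since y is joined to x0 it creates no new one. The vertices of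
  V_s(X)(y) are then exactly the component [x0]_{s,X}, whose full subcomplex is connected.\<close>

lemma rtrancl_map:
  assumes "(a, b) \<in> E\<^sup>*" and "\<And>u v. (u, v) \<in> E \<Longrightarrow> (f u, f v) \<in> F\<^sup>*"
  shows "(f a, f b) \<in> F\<^sup>*"
  using assms(1) by induction (blast intro: rtrancl_trans assms(2))+

lemma sym_sc_edges: "sym (sc_edges K)"
  unfolding sc_edges_def sym_def by (auto simp: insert_commute)

lemma sc_edges_rtrancl_sym: "(a, b) \<in> (sc_edges K)\<^sup>* \<Longrightarrow> (b, a) \<in> (sc_edges K)\<^sup>*"
  by (metis sym_sc_edges sym_rtrancl symD)

lemma sc_component_eq:
  assumes "(u, v) \<in> (sc_edges K)\<^sup>*"
  shows "sc_component K u = sc_component K v"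
proof -
  have "(u, w) \<in> (sc_edges K)\<^sup>* \<longleftrightarrow> (v, w) \<in> (sc_edges K)\<^sup>*" for w
    using assms sc_edges_rtrancl_sym rtrancl_trans by metis
  then show ?thesis unfolding sc_component_def by simp
qed

lemma sc_component_self: "z \<in> sc_vertices K \<Longrightarrow> z \<in> sc_component K z"
  unfolding sc_component_def by simp

lemma sc_component_eq_iff:
  assumes "v \<in> sc_vertices K"
  shows "sc_component K u = sc_component K v \<longleftrightarrow> (u, v) \<in> (sc_edges K)\<^sup>*"
proof
  assume "sc_component K u = sc_component K v"
  with sc_component_self[OF assms] show "(u, v) \<in> (sc_edges K)\<^sup>*"
    unfolding sc_component_def by blast
qed (rule sc_component_eq)

lemma sc_component_of_member:
  assumes "w \<in> sc_component K z"
  shows "sc_component K w = sc_component K z"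
proof -
  have "(z, w) \<in> (sc_edges K)\<^sup>*" using assms unfolding sc_component_def by simp
  then show ?thesis by (simp add: sc_component_eq)
qed

lemma sc_edges_full_subcomplex:
  "(a, b) \<in> sc_edges (full_subcomplex K W) \<longleftrightarrow> (a, b) \<in> sc_edges K \<and> a \<in> W \<and> b \<in> W"
  unfolding sc_edges_def full_subcomplex_def by auto

lemma sc_connected_full_subcomplex_component:
  assumes "z \<in> sc_vertices K" and "\<And>v. v \<in> sc_vertices K \<Longrightarrow> {v} \<in> K"
  shows "sc_connected (full_subcomplex K (sc_component K z))"
proof -
  let ?C = "sc_component K z" and ?E = "sc_edges (full_subcomplex K (sc_component K z))"
  have "sc_vertices (full_subcomplex K ?C) \<subseteq> ?C"
    unfolding sc_vertices_def full_subcomplex_def by blast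
  moreover have "v \<in> sc_vertices (full_subcomplex K ?C)" if "v \<in> ?C" for v
  proof -
    have "{v} \<in> K" using that assms(2) unfolding sc_component_def by simp
    with that show ?thesis unfolding sc_vertices_def full_subcomplex_def by blast
  qed
  ultimately have vertices: "sc_vertices (full_subcomplex K ?C) = ?C" by blast
  have path: "(z, w) \<in> ?E\<^sup>*" if "(z, w) \<in> (sc_edges K)\<^sup>*" for w
    using that
  proof induction
    case (step u v)
    have "v \<in> sc_vertices K"
      using step(2) unfolding sc_edges_def sc_vertices_def by blast
    moreover have "u \<in> sc_vertices K"
      using step(2) unfolding sc_edges_def sc_vertices_def by blast
    ultimately have "u \<in> ?C" "v \<in> ?C"
      using step(1,2) unfolding sc_component_def by auto
    with step(2) have "(u, v) \<in> ?E" by (simp add: sc_edges_full_subcomplex)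
    with step(3) show ?case by (rule rtrancl_into_rtrancl)
  qed simp
  have "(a, b) \<in> ?E\<^sup>*" if "a \<in> ?C" "b \<in> ?C" for a b
  proof -
    have "(z, a) \<in> ?E\<^sup>*" "(z, b) \<in> ?E\<^sup>*"
      using that path unfolding sc_component_def by auto
    then show ?thesis by (metis sc_edges_rtrancl_sym rtrancl_trans)
  qed
  then show ?thesis
    unfolding sc_connected_def vertices using sc_component_self[OF assms(1)] by blast
qed

lemma sc_vertices_rips: "s \<ge> 0 \<Longrightarrow> sc_vertices (rips s Z) = Z"
  unfolding sc_vertices_def rips_def by auto

lemma singleton_in_rips: "s \<ge> 0 \<Longrightarrow> z \<in> Z \<Longrightarrow> {z} \<in> rips s Z"
  unfolding rips_def by auto

lemma sc_edges_rips:
  "s \<ge> 0 \<Longrightarrow> (a, b) \<in> sc_edges (rips s Z) \<longleftrightarrow> a \<in> Z \<and> b \<in> Z \<and> dist a b \<le> s"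
  unfolding sc_edges_def rips_def by (auto simp: dist_commute)

lemma rcls_subset: "rcls s Z z \<subseteq> Z"
  unfolding rcls_def sc_component_def sc_vertices_def rips_def by auto

lemma rcls_mem_iff:
  assumes "s \<ge> 0" and "x \<in> Z"
  shows "x \<in> rcls s Z z \<longleftrightarrow> rcls s Z x = rcls s Z z"
  using sc_component_of_member sc_component_self sc_vertices_rips[OF assms(1)] assms(2)
  unfolding rcls_def by metis

lemma sc_connected_full_subcomplex_rcls:
  assumes "s \<ge> 0" and "z \<in> Z"
  shows "sc_connected (full_subcomplex (rips s Z) (rcls s Z z))"
  unfolding rcls_def
  by (rule sc_connected_full_subcomplex_component)
    (simp_all add: assms sc_vertices_rips singleton_in_rips)

lemma rcls_mono:
  assumes "s \<ge> 0" and "Z \<subseteq> Z'" and "rcls s Z x = rcls s Z x'" and "x' \<in> Z"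
  shows "rcls s Z' x = rcls s Z' x'"
proof -
  have "x' \<in> sc_vertices (rips s Z)" using assms(1,4) by (simp add: sc_vertices_rips)
  with assms(3) have "(x, x') \<in> (sc_edges (rips s Z))\<^sup>*"
    unfolding rcls_def by (simp add: sc_component_eq_iff)
  moreover have "sc_edges (rips s Z) \<subseteq> sc_edges (rips s Z')"
    using assms(2) unfolding sc_edges_def rips_def by blast
  ultimately have "(x, x') \<in> (sc_edges (rips s Z'))\<^sup>*"
    using rtrancl_mono by blast
  then show ?thesis unfolding rcls_def by (rule sc_component_eq)
qed

definition no_dist_between :: "'a::metric_space set \<Rightarrow> real \<Rightarrow> real \<Rightarrow> bool" where
  "no_dist_between X s t \<longleftrightarrow> (\<forall>u\<in>X. \<forall>v\<in>X. \<not> (s < dist u v \<and> dist u v < t))"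

definition retract_to :: "'a \<Rightarrow> 'a \<Rightarrow> 'a \<Rightarrow> 'a" where
  "retract_to y x0 z = (if z = y then x0 else z)"

lemma sc_edges_rips_insert_retract:
  assumes gap: "no_dist_between X s (s + r)" and "x0 \<in> X" and "dist y x0 < r" and "r \<le> s"
    and edge: "(a, b) \<in> sc_edges (rips s (insert y X))"
  shows "(retract_to y x0 a, retract_to y x0 b) \<in> sc_edges (rips s X)"
proof -
  have s0: "s \<ge> 0" using assms(3,4) zero_le_dist[of y x0] by linarith
  have near: "dist x0 v \<le> s" if "v \<in> X" "dist y v \<le> s" for v
  proof -
    have "dist x0 v \<le> dist x0 y + dist y v" by (rule dist_triangle)
    then have "dist x0 v < s + r" using that assms(3) by (simp add: dist_commute)
    then show ?thesis using gap \<open>x0 \<in> X\<close> \<open>v \<in> X\<close> unfolding no_dist_between_def by force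
  qed
  from edge have ab: "a \<in> insert y X" "b \<in> insert y X" "dist a b \<le> s"
    by (auto simp: sc_edges_rips[OF s0])
  have "dist (retract_to y x0 a) (retract_to y x0 b) \<le> s"
  proof (cases "a = y"; cases "b = y")
    assume "a = y" "b \<noteq> y"
    then show ?thesis using ab near unfolding retract_to_def by simp
  next
    assume "a \<noteq> y" "b = y"
    then show ?thesis using ab near[of a] unfolding retract_to_def by (simp add: dist_commute)
  qed (use ab s0 in \<open>simp_all add: retract_to_def\<close>)
  moreover have "retract_to y x0 a \<in> X" "retract_to y x0 b \<in> X"
    using ab \<open>x0 \<in> X\<close> unfolding retract_to_def by auto
  ultimately show ?thesis by (simp add: sc_edges_rips[OF s0])
qed

lemma rcls_insert_eq_iff:
  assumes gap: "no_dist_between X s (s + r)" and "x0 \<in> X" and "dist y x0 < r" and "r \<le> s"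
    and "y \<notin> X" and "x \<in> X" and "x' \<in> X"
  shows "rcls s (insert y X) x = rcls s (insert y X) x' \<longleftrightarrow> rcls s X x = rcls s X x'"
proof
  assume classes_Y: "rcls s (insert y X) x = rcls s (insert y X) x'"
  have s0: "s \<ge> 0" using assms(3,4) zero_le_dist[of y x0] by linarith
  then have "x' \<in> sc_vertices (rips s (insert y X))"
    using \<open>x' \<in> X\<close> by (simp add: sc_vertices_rips)
  with classes_Y have "(x, x') \<in> (sc_edges (rips s (insert y X)))\<^sup>*"
    unfolding rcls_def by (simp add: sc_component_eq_iff)
  then have "(retract_to y x0 x, retract_to y x0 x') \<in> (sc_edges (rips s X))\<^sup>*"
    by (rule rtrancl_map) (intro r_into_rtrancl sc_edges_rips_insert_retract[OF assms(1-4)])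
  moreover have "retract_to y x0 x = x" "retract_to y x0 x' = x'"
    using assms(5-7) unfolding retract_to_def by auto
  ultimately show "rcls s X x = rcls s X x'"
    unfolding rcls_def by (simp add: sc_component_eq)
next
  have s0: "s \<ge> 0" using assms(3,4) zero_le_dist[of y x0] by linarith
  show "rcls s X x = rcls s X x' \<Longrightarrow> rcls s (insert y X) x = rcls s (insert y X) x'"
    using rcls_mono[OF s0 _ _ \<open>x' \<in> X\<close>] by blast
qed

lemma rcls_insert_new_point:
  assumes "x0 \<in> X" and "dist y x0 \<le> s"
  shows "rcls s (insert y X) y = rcls s (insert y X) x0"
proof -
  have "s \<ge> 0" using assms(2) zero_le_dist[of y x0] by linarith
  then have "(y, x0) \<in> sc_edges (rips s (insert y X))"
    using assms by (simp add: sc_edges_rips)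
  then show ?thesis unfolding rcls_def by (intro sc_component_eq r_into_rtrancl)
qed

lemma pi0_insert_new_point:
  assumes "x0 \<in> X" and "dist y x0 \<le> s"
  shows "pi0 s (insert y X) = rcls s (insert y X) ` X"
  unfolding pi0_def using rcls_insert_new_point[OF assms] assms(1) by auto

lemma bij_betw_classes:
  assumes refl: "\<And>x. x \<in> X \<Longrightarrow> x \<in> h x"
    and closed: "\<And>x z. x \<in> X \<Longrightarrow> z \<in> h x \<Longrightarrow> z \<in> X \<and> h z = h x"
    and compat: "\<And>x x'. x \<in> X \<Longrightarrow> x' \<in> X \<Longrightarrow> g x = g x' \<longleftrightarrow> h x = h x'"
  shows "bij_betw (\<lambda>C. g (SOME x. x \<in> C)) (h ` X) (g ` X)"
proof -
  have rep: "g (SOME z. z \<in> h x) = g x" if "x \<in> X" for x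
  proof -
    have "(SOME z. z \<in> h x) \<in> h x" using refl[OF that] by (rule someI)
    with closed[OF that] compat that show ?thesis by blast
  qed
  have "inj_on (\<lambda>C. g (SOME x. x \<in> C)) (h ` X)"
    by (rule inj_onI) (auto simp: rep compat)
  moreover have "(\<lambda>C. g (SOME x. x \<in> C)) ` h ` X = g ` X"
    unfolding image_image by (simp add: rep cong: image_cong)
  ultimately show ?thesis unfolding bij_betw_def by blast
qed

lemma set_phase:
  "finite X \<Longrightarrow> set (phase X) = {dist x x' | x x'. x \<in> X \<and> x' \<in> X}"
proof -
  assume "finite X"
  moreover have "{dist x x' | x x'. x \<in> X \<and> x' \<in> X} = (\<lambda>(x, x'). dist x x') ` (X \<times> X)"
    by auto
  ultimately show ?thesis unfolding phase_def by simp
qed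

lemma no_dist_between_phase:
  assumes "finite X" and "i < length (phase X)" and "phase X ! i \<le> s"
    and "i + 1 < length (phase X) \<longrightarrow> t \<le> phase X ! (i + 1)"
  shows "no_dist_between X s t"
  unfolding no_dist_between_def
proof (intro ballI notI)
  fix u v assume "u \<in> X" "v \<in> X" and between: "s < dist u v \<and> dist u v < t"
  have "dist u v \<in> set (phase X)" using set_phase[OF assms(1)] \<open>u \<in> X\<close> \<open>v \<in> X\<close> by blast
  then obtain j where j: "j < length (phase X)" "phase X ! j = dist u v"
    by (auto simp: in_set_conv_nth)
  have sorted: "sorted (phase X)" unfolding phase_def by simp
  show False
  proof (cases "j \<le> i")
    case True
    then show False using sorted_nth_mono[OF sorted True assms(2)] j assms(3) between by linarith
  next
    case False
    then have "i + 1 < length (phase X)" "phase X ! (i + 1) \<le> phase X ! j"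
      using j(1) sorted_nth_mono[OF sorted] by auto
    then show False using j assms(4) between by linarith
  qed
qed

lemma phase_gap_below:
  assumes "finite X" and "1 \<le> i" and "i < length (phase X)" and "phase X ! i \<le> s"
    and "r < phase X ! 1 - phase X ! 0"
  shows "r < s"
proof -
  have sorted: "sorted (phase X)" unfolding phase_def by simp
  have "phase X ! 0 \<in> set (phase X)" using assms(3) by (intro nth_mem) auto
  then have "phase X ! 0 \<ge> 0" using set_phase[OF assms(1)] by auto
  moreover have "phase X ! 1 \<le> phase X ! i" using sorted_nth_mono[OF sorted assms(2,3)] .
  ultimately show ?thesis using assms(4,5) by linarith
qed

theorem lemma11:
  fixes X :: "'a::euclidean_space set" and y x0 :: 'a and r s :: real
  assumes "finite X" and "card X \<ge> 2" and "y \<notin> X"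
    and "x0 \<in> X" and "r > 0" and "dist y x0 < r"
    and "\<forall>i. i + 1 < length (phase X) \<longrightarrow> r < phase X ! (i + 1) - phase X ! i"
    and "\<exists>i. 1 \<le> i \<and> i < length (phase X) \<and> phase X ! i \<le> s \<and>
              (i + 1 < length (phase X) \<longrightarrow> s + r < phase X ! (i + 1))"
  shows "sc_connected (Vy s X y)
    \<and> (\<forall>x\<in>X. \<forall>x'\<in>X. rcls s X x = rcls s X x' \<longrightarrow>
          rcls s (insert y X) x = rcls s (insert y X) x')
    \<and> bij_betw (\<lambda>C. rcls s (insert y X) (SOME x. x \<in> C)) (pi0 s X) (pi0 s (insert y X))"
proof -
  \<comment> \<open>card X \<ge> 2 is not needed: the index i \<ge> 1 is supplied by the last hypothesis.\<close>
  obtain i where i: "1 \<le> i" "i < length (phase X)" "phase X ! i \<le> s"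
    "i + 1 < length (phase X) \<longrightarrow> s + r < phase X ! (i + 1)" using assms(8) by blast
  have "r < s" using phase_gap_below[OF assms(1) i(1-3)] assms(7) i(1,2) by fastforce
  have gap: "no_dist_between X s (s + r)"
    by (rule no_dist_between_phase[OF assms(1) i(2,3)]) (use i(4) in auto)
  have s0: "s \<ge> 0" and ys: "dist y x0 \<le> s" using \<open>r < s\<close> assms(5,6) by auto
  note classes = rcls_insert_eq_iff[OF gap assms(4,6) less_imp_le[OF \<open>r < s\<close>] assms(3)]
  have "{x \<in> X. rcls s (insert y X) x = rcls s (insert y X) y} = {x \<in> X. rcls s X x = rcls s X x0}"
    using classes[of _ x0] rcls_insert_new_point[OF assms(4) ys] assms(4) by auto
  also have "\<dots> = rcls s X x0"
    using rcls_mem_iff[OF s0] rcls_subset by blast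
  finally have "Vy s X y = full_subcomplex (rips s X) (rcls s X x0)" unfolding Vy_def by simp
  then have "sc_connected (Vy s X y)"
    using sc_connected_full_subcomplex_rcls[OF s0 assms(4)] by simp
  moreover have "bij_betw (\<lambda>C. rcls s (insert y X) (SOME x. x \<in> C)) (pi0 s X) (pi0 s (insert y X))"
    unfolding pi0_insert_new_point[OF assms(4) ys] unfolding pi0_def
  proof (rule bij_betw_classes)
    show "x \<in> rcls s X x" if "x \<in> X" for x using rcls_mem_iff[OF s0 that] by simp
    show "z \<in> X \<and> rcls s X z = rcls s X x" if "z \<in> rcls s X x" for x z
      using that rcls_subset rcls_mem_iff[OF s0] by blast
  qed (rule classes)
  ultimately show ?thesis using classes by blast
qed

end
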